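(* Let $f$ be a biderivation of $\mathcal{SV}(0)$, and let $\phi,\psi:\mathcal{SV}(0)\to\mathcal{SV}(0)$ be linear maps and $\rho_1,\rho_2,\rho_3,\theta_1,\theta_2,\theta_3$ linear complex-valued functions on $\mathcal{SV}(0)$ such that for all $x,y$, $$f(x,y)=\sum_{i=1}^3\rho_i(x)D_i(y)+[\phi(x),y]=\sum_{i=1}^3\theta_i(y)D_i(x)+[x,\psi(y)].$$ Let $\lambda\in\mathbb{C}$ be such that $\phi(L_m)-\lambda L_m\in\mathfrak{M}$ and $\psi(L_m)-\lambda L_m\in\mathfrak{M}$ for all $m\in\mathbb{Z}$ (such $\lambda$ exists). Then for every $n\in\mathbb{Z}$ there are $w_0^{(n)},o_0^{(n)}\in\mathbb{C}$ with $$\phi(M_n)=\lambda M_n+w_0^{(n)}M_0,\qquad \psi(M_n)=\lambda M_n+o_0^{(n)}M_0,$$ and moreover $\rho_i(M_n)=\theta_i(M_n)=0$ for $i=1,2,3$ and all $n\in\mathbb{Z}$.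
   Context: $\mathcal{SV}(0)$ is the complex Lie algebra with basis $\{L_i,Y_i,M_i\mid i\in\mathbb{Z}\}$ and brackets $[L_m,L_n]=(m-n)L_{m+n}$, $[L_m,Y_n]=(\frac12 m-n)Y_{m+n}$, $[L_m,M_n]=-nM_{m+n}$, $[Y_m,Y_n]=(m-n)M_{m+n}$, $[Y_m,M_n]=[M_m,M_n]=0$; $\mathfrak{M}=\bigoplus_{i\in\mathbb{Z}}\mathbb{C}M_i$. A biderivation of a Lie algebra $L$ is a bilinear map $f:L\times L\to L$ with $f([x,y],z)=[x,f(y,z)]+[f(x,z),y]$ and $f(x,[y,z])=[f(x,y),z]+[y,f(x,z)]$ for all $x,y,z\in L$. The linear maps $D_1,D_2,D_3$ are defined by $D_1(L_m)=M_m$, $D_1(Y_m)=D_1(M_m)=0$; $D_2(L_m)=mM_m$, $D_2(Y_m)=D_2(M_m)=0$; $D_3(L_m)=0$, $D_3(Y_m)=Y_m$, $D_3(M_m)=2M_m$. *)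

theory Defs
  imports Complex_Main "HOL-Library.Poly_Mapping"
begin

datatype sv_basis = L int | Y int | M int

type_synonym sv = "sv_basis \<Rightarrow>\<^sub>0 complex"

definition sv_scale :: "complex \<Rightarrow> sv \<Rightarrow> sv" where
  "sv_scale c x = Poly_Mapping.map (\<lambda>v. c * v) x"

definition sv_b :: "sv_basis \<Rightarrow> sv" where
  "sv_b b = Poly_Mapping.single b 1"

definition sv_lin_ext :: "(sv_basis \<Rightarrow> sv) \<Rightarrow> sv \<Rightarrow> sv" where
  "sv_lin_ext g x = (\<Sum>b\<in>Poly_Mapping.keys x. sv_scale (Poly_Mapping.lookup x b) (g b))"

fun sv_br :: "sv_basis \<Rightarrow> sv_basis \<Rightarrow> sv" where
  "sv_br (L m) (L n) = sv_scale (of_int (m - n)) (sv_b (L (m + n)))"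
| "sv_br (L m) (Y n) = sv_scale (of_int m / 2 - of_int n) (sv_b (Y (m + n)))"
| "sv_br (L m) (M n) = sv_scale (- of_int n) (sv_b (M (m + n)))"
| "sv_br (Y m) (L n) = sv_scale (- (of_int n / 2 - of_int m)) (sv_b (Y (m + n)))"
| "sv_br (M m) (L n) = sv_scale (of_int m) (sv_b (M (m + n)))"
| "sv_br (Y m) (Y n) = sv_scale (of_int (m - n)) (sv_b (M (m + n)))"
| "sv_br (Y m) (M n) = 0"
| "sv_br (M m) (Y n) = 0"
| "sv_br (M m) (M n) = 0"

definition sv_bracket :: "sv \<Rightarrow> sv \<Rightarrow> sv" where
  "sv_bracket x y = (\<Sum>a\<in>Poly_Mapping.keys x. \<Sum>b\<in>Poly_Mapping.keys y. sv_scale (Poly_Mapping.lookup x a * Poly_Mapping.lookup y b) (sv_br a b))"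

definition sv_linear :: "(sv \<Rightarrow> sv) \<Rightarrow> bool" where
  "sv_linear g \<longleftrightarrow> (\<forall>x y. g (x + y) = g x + g y) \<and> (\<forall>c x. g (sv_scale c x) = sv_scale c (g x))"

definition sv_functional :: "(sv \<Rightarrow> complex) \<Rightarrow> bool" where
  "sv_functional g \<longleftrightarrow> (\<forall>x y. g (x + y) = g x + g y) \<and> (\<forall>c x. g (sv_scale c x) = c * g x)"

definition sv_bilinear :: "(sv \<Rightarrow> sv \<Rightarrow> sv) \<Rightarrow> bool" where
  "sv_bilinear f \<longleftrightarrow> (\<forall>x. sv_linear (f x)) \<and> (\<forall>y. sv_linear (\<lambda>x. f x y))"

definition sv_biderivation :: "(sv \<Rightarrow> sv \<Rightarrow> sv) \<Rightarrow> bool" where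
  "sv_biderivation f \<longleftrightarrow> sv_bilinear f \<and>
     (\<forall>x y z. f (sv_bracket x y) z = sv_bracket x (f y z) + sv_bracket (f x z) y) \<and>
     (\<forall>x y z. f x (sv_bracket y z) = sv_bracket (f x y) z + sv_bracket y (f x z))"

fun sv_D_basis :: "nat \<Rightarrow> sv_basis \<Rightarrow> sv" where
  "sv_D_basis i (L m) = (if i = 1 then sv_b (M m) else if i = 2 then sv_scale (of_int m) (sv_b (M m)) else 0)"
| "sv_D_basis i (Y m) = (if i = 3 then sv_b (Y m) else 0)"
| "sv_D_basis i (M m) = (if i = 3 then sv_scale 2 (sv_b (M m)) else 0)"

definition sv_D :: "nat \<Rightarrow> sv \<Rightarrow> sv" where
  "sv_D i = sv_lin_ext (sv_D_basis i)"

definition sv_in_M :: "sv \<Rightarrow> bool" where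
  "sv_in_M x \<longleftrightarrow> (\<forall>b\<in>Poly_Mapping.keys x. \<exists>n. b = M n)"

end

theory Submission
  imports Defs
begin

text \<open>Only the two decompositions of \<open>f\<close> and the shape of \<open>\<phi>(L_m)\<close>, \<open>\<psi>(L_m)\<close> enter:
  evaluate \<open>f(M_n, L_m)\<close>, \<open>f(L_m, M_n)\<close> and \<open>f(M_n, M_k)\<close> in both forms and compare coefficients.
  Since \<open>[M_n, -]\<close> and \<open>[-, M_n]\<close> only see \<open>L\<close>-components, and brackets with \<open>L_m\<close> shift
  indices by \<open>m\<close> with a weight affine in \<open>m\<close>, suitable choices of \<open>m\<close> isolate each coefficient
  of \<open>\<phi>(M_n)\<close> and \<open>\<psi>(M_n)\<close> except the one at \<open>M_0\<close>, where the weight vanishes. The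
  \<open>\<rho>_1, \<rho>_2\<close> terms give \<open>\<rho>_1(M_n) + m \<rho>_2(M_n) = 0\<close> for all \<open>m \<noteq> n\<close>.\<close>

lemma lookup_sv_scale [simp]:
  "Poly_Mapping.lookup (sv_scale c x) b = c * Poly_Mapping.lookup x b"
  by (simp add: sv_scale_def map.rep_eq when_def)

lemma lookup_sv_b [simp]: "Poly_Mapping.lookup (sv_b a) b = (if a = b then 1 else 0)"
  by (simp add: sv_b_def lookup_single when_def)

lemma keys_sv_b [simp]: "Poly_Mapping.keys (sv_b a) = {a}"
  by (simp add: sv_b_def)

lemma sv_D_sv_b [simp]: "sv_D i (sv_b b) = sv_D_basis i b"
  by (auto simp: sv_D_def sv_lin_ext_def sv_scale_def map.rep_eq when_def intro!: poly_mapping_eqI)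

lemma sum_atLeastAtMost_1_3: "(\<Sum>i\<in>{1..3::nat}. g i) = g 1 + g 2 + g 3"
  by (simp add: numeral_3_eq_3 numeral_2_eq_2 atLeastAtMostSuc_conv add.commute add.left_commute)

lemma all_sv_basis_iff: "(\<forall>a. P a) \<longleftrightarrow> (\<forall>n. P (L n)) \<and> (\<forall>n. P (Y n)) \<and> (\<forall>n. P (M n))"
  by (metis sv_basis.exhaust)

lemma sum_keys_lookup_single:
  fixes x :: sv and g :: "sv_basis \<Rightarrow> complex"
  assumes "\<forall>a. a \<noteq> z \<longrightarrow> g a = 0"
  shows "(\<Sum>a\<in>Poly_Mapping.keys x. Poly_Mapping.lookup x a * g a) = Poly_Mapping.lookup x z * g z"
proof (cases "z \<in> Poly_Mapping.keys x")
  case True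
  have "(\<Sum>a\<in>Poly_Mapping.keys x - {z}. Poly_Mapping.lookup x a * g a) = 0"
    by (intro sum.neutral ballI) (simp add: assms)
  then show ?thesis by (subst sum.remove[OF finite_keys True]) simp
next
  case False
  then show ?thesis
    using assms by (auto simp: in_keys_iff intro!: sum.neutral)
qed

lemma lookup_bracket_right:
  "Poly_Mapping.lookup (sv_bracket x (sv_b b)) c
     = (\<Sum>a\<in>Poly_Mapping.keys x. Poly_Mapping.lookup x a * Poly_Mapping.lookup (sv_br a b) c)"
  by (simp add: sv_bracket_def lookup_sum)

lemma lookup_bracket_left:
  "Poly_Mapping.lookup (sv_bracket (sv_b a) y) c
     = (\<Sum>b\<in>Poly_Mapping.keys y. Poly_Mapping.lookup y b * Poly_Mapping.lookup (sv_br a b) c)"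
  by (simp add: sv_bracket_def lookup_sum)

lemma lookup_bracket_xL_L:
  "Poly_Mapping.lookup (sv_bracket x (sv_b (L m))) (L k) = Poly_Mapping.lookup x (L (k - m)) * of_int (k - 2 * m)"
  unfolding lookup_bracket_right
  by (subst sum_keys_lookup_single[where z = "L (k - m)"]) (auto simp: all_sv_basis_iff algebra_simps)

lemma lookup_bracket_xL_Y:
  "Poly_Mapping.lookup (sv_bracket x (sv_b (L m))) (Y k)
     = Poly_Mapping.lookup x (Y (k - m)) * (- (of_int m / 2 - of_int (k - m)))"
  unfolding lookup_bracket_right
  by (subst sum_keys_lookup_single[where z = "Y (k - m)"]) (auto simp: all_sv_basis_iff)

lemma lookup_bracket_xL_M:
  "Poly_Mapping.lookup (sv_bracket x (sv_b (L m))) (M k) = Poly_Mapping.lookup x (M (k - m)) * of_int (k - m)"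
  unfolding lookup_bracket_right
  by (subst sum_keys_lookup_single[where z = "M (k - m)"]) (auto simp: all_sv_basis_iff)

lemma lookup_bracket_xM_L: "Poly_Mapping.lookup (sv_bracket x (sv_b (M n))) (L k) = 0"
proof -
  have "\<forall>a. Poly_Mapping.lookup (sv_br a (M n)) (L k) = 0" by (simp add: all_sv_basis_iff)
  then show ?thesis unfolding lookup_bracket_right by simp
qed

lemma lookup_bracket_xM_Y: "Poly_Mapping.lookup (sv_bracket x (sv_b (M n))) (Y k) = 0"
proof -
  have "\<forall>a. Poly_Mapping.lookup (sv_br a (M n)) (Y k) = 0" by (simp add: all_sv_basis_iff)
  then show ?thesis unfolding lookup_bracket_right by simp
qed

lemma lookup_bracket_xM_M:
  "Poly_Mapping.lookup (sv_bracket x (sv_b (M n))) (M k) = Poly_Mapping.lookup x (L (k - n)) * (- of_int n)"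
  unfolding lookup_bracket_right
  by (subst sum_keys_lookup_single[where z = "L (k - n)"]) (auto simp: all_sv_basis_iff)

lemma lookup_bracket_Lx_L:
  "Poly_Mapping.lookup (sv_bracket (sv_b (L m)) y) (L k) = Poly_Mapping.lookup y (L (k - m)) * of_int (2 * m - k)"
  unfolding lookup_bracket_left
  by (subst sum_keys_lookup_single[where z = "L (k - m)"]) (auto simp: all_sv_basis_iff algebra_simps)

lemma lookup_bracket_Lx_Y:
  "Poly_Mapping.lookup (sv_bracket (sv_b (L m)) y) (Y k)
     = Poly_Mapping.lookup y (Y (k - m)) * (of_int m / 2 - of_int (k - m))"
  unfolding lookup_bracket_left
  by (subst sum_keys_lookup_single[where z = "Y (k - m)"]) (auto simp: all_sv_basis_iff)

lemma lookup_bracket_Lx_M: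
  "Poly_Mapping.lookup (sv_bracket (sv_b (L m)) y) (M k) = Poly_Mapping.lookup y (M (k - m)) * (- of_int (k - m))"
  unfolding lookup_bracket_left
  by (subst sum_keys_lookup_single[where z = "M (k - m)"]) (auto simp: all_sv_basis_iff)

lemma lookup_bracket_Mx_L: "Poly_Mapping.lookup (sv_bracket (sv_b (M n)) y) (L k) = 0"
proof -
  have "\<forall>a. Poly_Mapping.lookup (sv_br (M n) a) (L k) = 0" by (simp add: all_sv_basis_iff)
  then show ?thesis unfolding lookup_bracket_left by simp
qed

lemma lookup_bracket_Mx_Y: "Poly_Mapping.lookup (sv_bracket (sv_b (M n)) y) (Y k) = 0"
proof -
  have "\<forall>a. Poly_Mapping.lookup (sv_br (M n) a) (Y k) = 0" by (simp add: all_sv_basis_iff)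
  then show ?thesis unfolding lookup_bracket_left by simp
qed

lemma lookup_bracket_Mx_M:
  "Poly_Mapping.lookup (sv_bracket (sv_b (M n)) y) (M k) = Poly_Mapping.lookup y (L (k - n)) * of_int n"
  unfolding lookup_bracket_left
  by (subst sum_keys_lookup_single[where z = "L (k - n)"]) (auto simp: all_sv_basis_iff)

lemmas lookup_bracket_basis =
  lookup_bracket_xL_L lookup_bracket_xL_Y lookup_bracket_xL_M
  lookup_bracket_xM_L lookup_bracket_xM_Y lookup_bracket_xM_M
  lookup_bracket_Lx_L lookup_bracket_Lx_Y lookup_bracket_Lx_M
  lookup_bracket_Mx_L lookup_bracket_Mx_Y lookup_bracket_Mx_M

lemma lookup_L_Y_if_in_M_diff:
  assumes "sv_in_M (x - sv_scale c (sv_b (L m)))"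
  shows "Poly_Mapping.lookup x (L j) = (if j = m then c else 0)" and "Poly_Mapping.lookup x (Y j) = 0"
proof -
  have "L j \<notin> Poly_Mapping.keys (x - sv_scale c (sv_b (L m)))"
    and "Y j \<notin> Poly_Mapping.keys (x - sv_scale c (sv_b (L m)))"
    using assms unfolding sv_in_M_def by auto
  then show "Poly_Mapping.lookup x (L j) = (if j = m then c else 0)" and "Poly_Mapping.lookup x (Y j) = 0"
    by (auto simp: in_keys_iff lookup_minus)
qed

lemma sv_eq_scale_M_plus_scale_M0:
  assumes "\<And>j. Poly_Mapping.lookup x (L j) = 0" and "\<And>j. Poly_Mapping.lookup x (Y j) = 0"
    and "\<And>j. j \<noteq> 0 \<Longrightarrow> Poly_Mapping.lookup x (M j) = (if j = n then c else 0)"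
  shows "\<exists>w. x = sv_scale c (sv_b (M n)) + sv_scale w (sv_b (M 0))"
proof
  let ?w = "Poly_Mapping.lookup x (M 0) - (if n = 0 then c else 0)"
  show "x = sv_scale c (sv_b (M n)) + sv_scale ?w (sv_b (M 0))"
  proof (rule poly_mapping_eqI)
    fix b show "Poly_Mapping.lookup x b = Poly_Mapping.lookup (sv_scale c (sv_b (M n)) + sv_scale ?w (sv_b (M 0))) b"
      using assms by (cases b) (auto simp: lookup_add)
  qed
qed

lemma affine_vanishing:
  fixes a b :: complex
  assumes "\<And>m. m \<noteq> n \<Longrightarrow> a + of_int m * b = 0"
  shows "a = 0" and "b = 0"
proof -
  have n1: "a + of_int (n + 1) * b = 0" and n2: "a + of_int (n + 2) * b = 0"
    by (rule assms, simp)+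
  have "b = (a + of_int (n + 2) * b) - (a + of_int (n + 1) * b)"
    by (simp add: algebra_simps)
  with n1 n2 show "b = 0" by simp
  with n1 show "a = 0" by simp
qed

locale sv_two_sided_form =
  fixes \<phi> \<psi> :: "sv \<Rightarrow> sv" and \<rho> \<theta> :: "nat \<Rightarrow> sv \<Rightarrow> complex" and lam :: complex
  assumes two_sided:
    "\<And>x y. (\<Sum>i\<in>{1..3}. sv_scale (\<rho> i x) (sv_D i y)) + sv_bracket (\<phi> x) y
           = (\<Sum>i\<in>{1..3}. sv_scale (\<theta> i y) (sv_D i x)) + sv_bracket x (\<psi> y)"
    and \<phi>_L: "\<And>m. sv_in_M (\<phi> (sv_b (L m)) - sv_scale lam (sv_b (L m)))"
    and \<psi>_L: "\<And>m. sv_in_M (\<psi> (sv_b (L m)) - sv_scale lam (sv_b (L m)))"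
begin

lemma coefficient_identity:
  "\<rho> 1 x * Poly_Mapping.lookup (sv_D 1 y) c + \<rho> 2 x * Poly_Mapping.lookup (sv_D 2 y) c
     + \<rho> 3 x * Poly_Mapping.lookup (sv_D 3 y) c + Poly_Mapping.lookup (sv_bracket (\<phi> x) y) c
   = \<theta> 1 y * Poly_Mapping.lookup (sv_D 1 x) c + \<theta> 2 y * Poly_Mapping.lookup (sv_D 2 x) c
     + \<theta> 3 y * Poly_Mapping.lookup (sv_D 3 x) c + Poly_Mapping.lookup (sv_bracket x (\<psi> y)) c"
  using arg_cong [OF two_sided [of x y], of "\<lambda>z. Poly_Mapping.lookup z c"]
  by (simp only: sum_atLeastAtMost_1_3 lookup_add lookup_sv_scale)

lemmas lookup_\<phi>_L = lookup_L_Y_if_in_M_diff [OF \<phi>_L]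
lemmas lookup_\<psi>_L = lookup_L_Y_if_in_M_diff [OF \<psi>_L]

lemma lookup_\<phi>_M_L: "Poly_Mapping.lookup (\<phi> (sv_b (M n))) (L j) = 0"
  using coefficient_identity [of "sv_b (M n)" "sv_b (L (j - 1))" "L (2 * j - 1)"]
  by (simp add: lookup_bracket_basis)

lemma lookup_\<phi>_M_Y: "Poly_Mapping.lookup (\<phi> (sv_b (M n))) (Y j) = 0"
  using coefficient_identity [of "sv_b (M n)" "sv_b (L (2 * j - 2))" "Y (3 * j - 2)"]
  by (simp add: lookup_bracket_basis)

lemma lookup_\<phi>_M_M:
  assumes "j \<noteq> 0"
  shows "Poly_Mapping.lookup (\<phi> (sv_b (M n))) (M j) = (if j = n then lam else 0)"
proof -
  have "Poly_Mapping.lookup (\<phi> (sv_b (M n))) (M j) * of_int j = (if j = n then lam * of_int n else 0)"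
    using coefficient_identity [of "sv_b (M n)" "sv_b (L (n - j + 1))" "M (n + 1)"] assms
    by (simp add: lookup_bracket_basis lookup_\<psi>_L)
  then show ?thesis
    using assms by (auto split: if_splits)
qed

lemma lookup_\<psi>_M_L: "Poly_Mapping.lookup (\<psi> (sv_b (M n))) (L j) = 0"
  using coefficient_identity [of "sv_b (L (j + 1))" "sv_b (M n)" "L (2 * j + 1)"]
  by (simp add: lookup_bracket_basis)

lemma lookup_\<psi>_M_Y: "Poly_Mapping.lookup (\<psi> (sv_b (M n))) (Y j) = 0"
  using coefficient_identity [of "sv_b (L (2 * j + 2))" "sv_b (M n)" "Y (3 * j + 2)"]
  by (simp add: lookup_bracket_basis)

lemma lookup_\<psi>_M_M:
  assumes "j \<noteq> 0"
  shows "Poly_Mapping.lookup (\<psi> (sv_b (M n))) (M j) = (if j = n then lam else 0)"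
proof -
  have "Poly_Mapping.lookup (\<psi> (sv_b (M n))) (M j) * of_int j = (if j = n then lam * of_int n else 0)"
    using coefficient_identity [of "sv_b (L (n - j + 1))" "sv_b (M n)" "M (n + 1)"] assms
    by (cases "j = n") (auto simp: lookup_bracket_basis lookup_\<phi>_L)
  then show ?thesis
    using assms by (auto split: if_splits)
qed

lemma \<phi>_M: "\<exists>w. \<phi> (sv_b (M n)) = sv_scale lam (sv_b (M n)) + sv_scale w (sv_b (M 0))"
  by (rule sv_eq_scale_M_plus_scale_M0) (simp_all add: lookup_\<phi>_M_L lookup_\<phi>_M_Y lookup_\<phi>_M_M)

lemma \<psi>_M: "\<exists>w. \<psi> (sv_b (M n)) = sv_scale lam (sv_b (M n)) + sv_scale w (sv_b (M 0))"
  by (rule sv_eq_scale_M_plus_scale_M0) (simp_all add: lookup_\<psi>_M_L lookup_\<psi>_M_Y lookup_\<psi>_M_M)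

lemma \<rho>_3_M: "\<rho> 3 (sv_b (M n)) = 0"
  using coefficient_identity [of "sv_b (M n)" "sv_b (M (n + 1))" "M (n + 1)"]
  by (simp add: lookup_bracket_basis lookup_\<phi>_M_L lookup_\<psi>_M_L)

lemma \<theta>_3_M: "\<theta> 3 (sv_b (M n)) = 0"
  using coefficient_identity [of "sv_b (M (n + 1))" "sv_b (M n)" "M (n + 1)"]
  by (simp add: lookup_bracket_basis lookup_\<phi>_M_L lookup_\<psi>_M_L)

lemma \<rho>_1_2_M: "\<rho> 1 (sv_b (M n)) = 0" "\<rho> 2 (sv_b (M n)) = 0"
proof -
  have affine: "\<rho> 1 (sv_b (M n)) + of_int m * \<rho> 2 (sv_b (M n)) = 0" if "m \<noteq> n" for m
    using coefficient_identity [of "sv_b (M n)" "sv_b (L m)" "M m"] that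
    by (simp add: lookup_bracket_basis lookup_\<psi>_L algebra_simps)
  show "\<rho> 1 (sv_b (M n)) = 0" "\<rho> 2 (sv_b (M n)) = 0"
    using affine_vanishing [OF affine] by auto
qed

lemma \<theta>_1_2_M: "\<theta> 1 (sv_b (M n)) = 0" "\<theta> 2 (sv_b (M n)) = 0"
proof -
  have affine: "\<theta> 1 (sv_b (M n)) + of_int m * \<theta> 2 (sv_b (M n)) = 0" if "m \<noteq> n" for m
    using coefficient_identity [of "sv_b (L m)" "sv_b (M n)" "M m"] that
    by (cases "n = 0") (simp_all add: lookup_bracket_basis lookup_\<phi>_L algebra_simps)
  show "\<theta> 1 (sv_b (M n)) = 0" "\<theta> 2 (sv_b (M n)) = 0"
    using affine_vanishing [OF affine] by auto
qed

lemma \<rho>_\<theta>_M: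
  assumes "i \<in> {1..3}"
  shows "\<rho> i (sv_b (M n)) = 0 \<and> \<theta> i (sv_b (M n)) = 0"
proof -
  from assms have "i = 1 \<or> i = 2 \<or> i = 3" by auto
  then show ?thesis
    using \<rho>_1_2_M \<theta>_1_2_M \<rho>_3_M \<theta>_3_M by auto
qed

end

theorem lemma3p4:
  fixes f :: "sv \<Rightarrow> sv \<Rightarrow> sv" and \<phi> \<psi> :: "sv \<Rightarrow> sv"
    and \<rho> \<theta> :: "nat \<Rightarrow> sv \<Rightarrow> complex" and lam :: complex
  assumes "sv_biderivation f"
    and "sv_linear \<phi>" and "sv_linear \<psi>"
    and "\<And>i. i \<in> {1..3} \<Longrightarrow> sv_functional (\<rho> i)"
    and "\<And>i. i \<in> {1..3} \<Longrightarrow> sv_functional (\<theta> i)"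
    and "\<And>x y. f x y = (\<Sum>i\<in>{1..3}. sv_scale (\<rho> i x) (sv_D i y)) + sv_bracket (\<phi> x) y"
    and "\<And>x y. f x y = (\<Sum>i\<in>{1..3}. sv_scale (\<theta> i y) (sv_D i x)) + sv_bracket x (\<psi> y)"
    and "\<And>m. sv_in_M (\<phi> (sv_b (L m)) - sv_scale lam (sv_b (L m)))"
    and "\<And>m. sv_in_M (\<psi> (sv_b (L m)) - sv_scale lam (sv_b (L m)))"
  shows "(\<forall>n. \<exists>w o'. \<phi> (sv_b (M n)) = sv_scale lam (sv_b (M n)) + sv_scale w (sv_b (M 0))
                 \<and> \<psi> (sv_b (M n)) = sv_scale lam (sv_b (M n)) + sv_scale o' (sv_b (M 0)))
       \<and> (\<forall>i\<in>{1..3}. \<forall>n. \<rho> i (sv_b (M n)) = 0 \<and> \<theta> i (sv_b (M n)) = 0)"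
proof -
  interpret sv_two_sided_form \<phi> \<psi> \<rho> \<theta> lam
    by unfold_locales (metis assms(6,7), fact assms(8), fact assms(9))
  show ?thesis
    using \<phi>_M \<psi>_M \<rho>_\<theta>_M by blast
qed

end
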